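(* Let $K$ be a global function field, fix a prime $\infty$ of $K$, let $\mathcal{O}$ be the ring of elements of $K$ regular at every prime other than $\infty$, and let $\mathbb{F}_q$ be the full constant field of $K$ (so $\mathcal{O}^*=\mathbb{F}_q^*$). Let $\phi\in\mathcal{O}[X]$ be a polynomial of degree $d\geqslant2$ with leading coefficient in $\mathcal{O}^*$. If $\mathrm{Per}(\phi,K)$ contains at least two fixed points and a cycle of length greater than $1$, then $\mathcal{P}=\mathrm{Per}(\phi,K)$ satisfies: $\phi(\mathcal{P})\subseteq\mathcal{P}$, and the differences $y-x$, with $(x,y)$ ranging over pairs of distinct elements of $\mathcal{P}$, are all equal up to multiplication by elements of $\mathbb{F}_q^*$.
   Context: A global function field is a finite extension of $\mathbb{F}_p(t)$; its full constant field is the algebraic closure of $\mathbb{F}_p$ in $K$. $\phi$ is viewed as a map $K\to K$; $\mathrm{Per}(\phi,K)$ is the set of $x\in K$ with $\phi^n(x)=x$ for some $n\geqslant1$; a cycle is the forward orbit of a periodic point and its length is its cardinality. *)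

theory Defs
  imports "HOL-Computational_Algebra.Computational_Algebra"
begin

definition prime_subfield :: "'a::field set" where
  "prime_subfield = range of_int"

definition algebraic_over_prime :: "'a::field \<Rightarrow> bool" where
  "algebraic_over_prime x \<longleftrightarrow>
     (\<exists>f :: 'a poly. f \<noteq> 0 \<and> (\<forall>i. coeff f i \<in> prime_subfield) \<and> poly f x = 0)"

definition rat_fun_subfield :: "'a::field \<Rightarrow> 'a set" where
  "rat_fun_subfield t = {poly f t / poly g t | f g.
      (\<forall>i. coeff f i \<in> prime_subfield) \<and> (\<forall>i. coeff g i \<in> prime_subfield) \<and> poly g t \<noteq> 0}"

text \<open>K (the whole type) is a global function field: positive characteristic and a finite
  extension of F_p(t) for some t transcendental over F_p.\<close>
definition global_function_field :: "'a::field itself \<Rightarrow> bool" where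
  "global_function_field _ \<longleftrightarrow> CHAR('a) > 0 \<and>
     (\<exists>t::'a. \<not> algebraic_over_prime t \<and>
        (\<exists>B :: 'a set. finite B \<and>
           (\<forall>x::'a. \<exists>c. (\<forall>b\<in>B. c b \<in> rat_fun_subfield t) \<and> x = (\<Sum>b\<in>B. c b * b))))"

text \<open>A prime (place) of K, represented by its valuation ring: a proper subring V of K such
  that for every nonzero x, x or its inverse lies in V.\<close>
definition is_prime_of :: "'a::field set \<Rightarrow> bool" where
  "is_prime_of V \<longleftrightarrow> 1 \<in> V \<and> (\<forall>x\<in>V. \<forall>y\<in>V. x + y \<in> V \<and> x * y \<in> V \<and> - x \<in> V)
     \<and> V \<noteq> UNIV \<and> (\<forall>x. x \<noteq> 0 \<longrightarrow> x \<in> V \<or> inverse x \<in> V)"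

definition ring_away_from :: "'a::field set \<Rightarrow> 'a set" where
  "ring_away_from Vinf = {x. \<forall>V. is_prime_of V \<and> V \<noteq> Vinf \<longrightarrow> x \<in> V}"

text \<open>The full constant field: algebraic closure of F_p in K.\<close>
definition constant_field :: "'a::field set" where
  "constant_field = {x. algebraic_over_prime x}"

definition periodic_points :: "('a \<Rightarrow> 'a) \<Rightarrow> 'a set" where
  "periodic_points f = {x. \<exists>n\<ge>1. (f ^^ n) x = x}"

end

theory Submission
  imports Defs
begin

text \<open>In positive characteristic the constants of \<open>K\<close> are exactly the elements lying in every
  valuation ring: a constant is a root of a polynomial over the prime field, which is a field
  inside every valuation ring, and a transcendental \<open>v\<close> is excluded from a valuation ring
  obtained by Chevalley's argument, as a maximal subring containing \<open>1 / v\<close> but not \<open>v\<close>.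
  Hence every unit \<open>u\<close> of \<open>O\<close> is a constant, because \<open>u\<close> or \<open>1 / u\<close> also lies in the valuation
  ring at \<open>\<infinity>\<close>.

  Since \<open>deg \<phi> \<ge> 2\<close> and the leading coefficient of \<open>\<phi>\<close> is a unit, a point with a pole at a
  prime \<open>V \<noteq> \<infinity>\<close> has ever deeper poles along its orbit, so it cannot be periodic; thus
  periodic points lie in \<open>O\<close>. As \<open>x - y\<close> divides \<open>\<phi> x - \<phi> y\<close> in \<open>O\<close>, for a periodic \<open>p\<close> and
  a fixed \<open>q\<close> the elements \<open>p - q\<close> and \<open>\<phi> p - q\<close> divide each other along the cycle, so
  \<open>\<phi> p - q = c (p - q)\<close> with a constant \<open>c\<close>. Comparing these relations for two distinct fixed
  points \<open>a, b\<close> and a non-fixed periodic point shows that every periodic \<open>z\<close> satisfies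
  \<open>z - a \<in> \<bbbF>\<^sub>q (b - a)\<close>.\<close>

section \<open>Subrings\<close>

definition is_subring :: "'a::comm_ring_1 set \<Rightarrow> bool" where
  "is_subring R \<longleftrightarrow> 1 \<in> R \<and> (\<forall>x\<in>R. \<forall>y\<in>R. x + y \<in> R \<and> x * y \<in> R \<and> - x \<in> R)"

lemma
  assumes "is_subring R"
  shows subring_one: "1 \<in> R"
    and subring_add: "x \<in> R \<Longrightarrow> y \<in> R \<Longrightarrow> x + y \<in> R"
    and subring_mult: "x \<in> R \<Longrightarrow> y \<in> R \<Longrightarrow> x * y \<in> R"
    and subring_uminus: "x \<in> R \<Longrightarrow> - x \<in> R"
  using assms unfolding is_subring_def by auto

lemma subring_zero: "is_subring R \<Longrightarrow> 0 \<in> R"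
  by (metis add.right_inverse subring_add subring_one subring_uminus)

lemma subring_diff: "is_subring R \<Longrightarrow> x \<in> R \<Longrightarrow> y \<in> R \<Longrightarrow> x - y \<in> R"
  by (metis diff_conv_add_uminus subring_add subring_uminus)

lemma subring_power: "is_subring R \<Longrightarrow> x \<in> R \<Longrightarrow> x ^ n \<in> R"
  by (induction n) (auto intro: subring_one subring_mult)

lemma subring_of_int: "is_subring R \<Longrightarrow> of_int k \<in> R"
proof -
  assume R: "is_subring R"
  have "of_nat n \<in> R" for n
    by (induction n) (auto intro: subring_add subring_one subring_zero R)
  then show ?thesis
    by (cases k rule: int_cases2) (auto intro: subring_uminus R)
qed

lemma subring_sum: "is_subring R \<Longrightarrow> (\<And>i. i \<in> A \<Longrightarrow> f i \<in> R) \<Longrightarrow> sum f A \<in> R"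
  by (induction A rule: infinite_finite_induct) (auto intro: subring_add subring_zero)

lemma subring_poly: "is_subring R \<Longrightarrow> x \<in> R \<Longrightarrow> (\<And>i. coeff p i \<in> R) \<Longrightarrow> poly p x \<in> R"
proof (induction p)
  case (pCons a p)
  then show ?case
    by (metis coeff_pCons_0 coeff_pCons_Suc poly_pCons subring_add subring_mult)
qed (simp add: subring_zero)

lemma subring_poly_diff_dvd:
  assumes R: "is_subring R" and p: "\<And>i. coeff p i \<in> R" and "x \<in> R" "y \<in> R"
  shows "\<exists>r\<in>R. poly p x - poly p y = (x - y) * r"
  using p
proof (induction p)
  case (pCons a p)
  have "\<And>i. coeff p i \<in> R"
    using pCons.prems by (metis coeff_pCons_Suc)
  then obtain r where r: "r \<in> R" "poly p x - poly p y = (x - y) * r"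
    using pCons.IH by blast
  have "poly (pCons a p) x - poly (pCons a p) y = (x - y) * poly p x + y * (poly p x - poly p y)"
    by (simp add: algebra_simps)
  also have "\<dots> = (x - y) * (poly p x + y * r)"
    unfolding r(2) by (simp add: algebra_simps)
  finally show ?case
    using subring_poly[OF R \<open>x \<in> R\<close> \<open>\<And>i. coeff p i \<in> R\<close>] r(1) \<open>y \<in> R\<close>
    by (meson R subring_add subring_mult)
qed (auto intro!: bexI[of _ 0] subring_zero[OF R])

lemma subring_Inter: "(\<And>R. R \<in> F \<Longrightarrow> is_subring R) \<Longrightarrow> is_subring (\<Inter>F)"
  unfolding is_subring_def by blast

lemma subring_Union_chain:
  assumes "C \<noteq> {}" and "\<And>R. R \<in> C \<Longrightarrow> is_subring R"
    and chain: "\<And>R S. R \<in> C \<Longrightarrow> S \<in> C \<Longrightarrow> R \<subseteq> S \<or> S \<subseteq> R"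
  shows "is_subring (\<Union>C)"
  unfolding is_subring_def
proof (intro conjI ballI)
  show "1 \<in> \<Union>C"
    using assms(1,2) subring_one by blast
  fix x y assume "x \<in> \<Union>C" "y \<in> \<Union>C"
  then obtain R where "R \<in> C" "x \<in> R" "y \<in> R"
    using chain by blast
  then show "x + y \<in> \<Union>C" "x * y \<in> \<Union>C" "- x \<in> \<Union>C"
    using assms(2) subring_add subring_mult subring_uminus by blast+
qed

definition is_subfield :: "'a::field set \<Rightarrow> bool" where
  "is_subfield C \<longleftrightarrow> is_subring C \<and> (\<forall>x\<in>C. inverse x \<in> C)"

lemma subfield_divide: "is_subfield C \<Longrightarrow> x \<in> C \<Longrightarrow> y \<in> C \<Longrightarrow> x / y \<in> C"
  unfolding is_subfield_def divide_inverse by (blast intro: subring_mult)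

definition ring_adjoin :: "'a::comm_ring_1 set \<Rightarrow> 'a \<Rightarrow> 'a set" where
  "ring_adjoin R x = {poly f x | f. \<forall>i. coeff f i \<in> R}"

lemma ring_adjoinI: "(\<And>i. coeff f i \<in> R) \<Longrightarrow> poly f x \<in> ring_adjoin R x"
  unfolding ring_adjoin_def by blast

lemma subset_ring_adjoin: "is_subring R \<Longrightarrow> R \<subseteq> ring_adjoin R x"
proof
  fix r assume "is_subring R" "r \<in> R"
  then have "poly [:r:] x \<in> ring_adjoin R x"
    by (intro ring_adjoinI) (simp add: coeff_pCons subring_zero split: nat.splits)
  then show "r \<in> ring_adjoin R x"
    by simp
qed

lemma mem_ring_adjoin_self: "is_subring R \<Longrightarrow> x \<in> ring_adjoin R x"
  using ring_adjoinI[of "[:0, 1:]" R x]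
  by (simp add: coeff_pCons subring_zero subring_one split: nat.splits)

lemma subring_ring_adjoin:
  assumes R: "is_subring R"
  shows "is_subring (ring_adjoin R x)"
  unfolding is_subring_def
proof (intro conjI ballI)
  show "1 \<in> ring_adjoin R x"
    using subset_ring_adjoin[OF R] subring_one[OF R] by blast
  fix a b assume "a \<in> ring_adjoin R x" "b \<in> ring_adjoin R x"
  then obtain f g where f: "\<forall>i. coeff f i \<in> R" "a = poly f x"
    and g: "\<forall>i. coeff g i \<in> R" "b = poly g x"
    unfolding ring_adjoin_def by blast
  have "coeff (f + g) i \<in> R" "coeff (f * g) i \<in> R" "coeff (- f) i \<in> R" for i
    using f(1) g(1) R by (auto simp: coeff_mult intro!: subring_add subring_sum subring_mult subring_uminus)
  then have "poly (f + g) x \<in> ring_adjoin R x" "poly (f * g) x \<in> ring_adjoin R x"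
    "poly (- f) x \<in> ring_adjoin R x"
    by (blast intro: ring_adjoinI)+
  then show "a + b \<in> ring_adjoin R x" "a * b \<in> ring_adjoin R x" "- a \<in> ring_adjoin R x"
    unfolding f(2) g(2) by simp_all
qed

definition principal_ideal :: "'a::comm_ring_1 set \<Rightarrow> 'a \<Rightarrow> 'a set" where
  "principal_ideal R w = (\<lambda>r. w * r) ` R"

lemma principal_idealI: "r \<in> R \<Longrightarrow> w * r \<in> principal_ideal R w"
  unfolding principal_ideal_def by blast

lemma principal_ideal_add:
  "is_subring R \<Longrightarrow> a \<in> principal_ideal R w \<Longrightarrow> b \<in> principal_ideal R w \<Longrightarrow> a + b \<in> principal_ideal R w"
  unfolding principal_ideal_def by (auto simp flip: distrib_left intro: subring_add)

lemma principal_ideal_diff: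
  "is_subring R \<Longrightarrow> a \<in> principal_ideal R w \<Longrightarrow> b \<in> principal_ideal R w \<Longrightarrow> a - b \<in> principal_ideal R w"
  unfolding principal_ideal_def by (auto simp flip: right_diff_distrib intro: subring_diff)

lemma principal_ideal_mult:
  "is_subring R \<Longrightarrow> a \<in> principal_ideal R w \<Longrightarrow> r \<in> R \<Longrightarrow> a * r \<in> principal_ideal R w"
  unfolding principal_ideal_def by (auto simp: mult.assoc intro: subring_mult)

lemma principal_ideal_subset: "is_subring R \<Longrightarrow> w \<in> R \<Longrightarrow> principal_ideal R w \<subseteq> R"
  unfolding principal_ideal_def by (auto intro: subring_mult)

lemma one_minus_power_principal_ideal:
  assumes R: "is_subring R" and "w \<in> R" and s: "1 - s \<in> principal_ideal R w"
  shows "1 - s ^ n \<in> principal_ideal R w"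
proof (induction n)
  case 0
  show ?case using principal_idealI[OF subring_zero[OF R]] by simp
next
  case (Suc n)
  have "s \<in> R"
    using s principal_ideal_subset[OF R \<open>w \<in> R\<close>] subring_diff[OF R subring_one[OF R]]
    by fastforce
  have "1 - s ^ Suc n = (1 - s ^ n) * s + (1 - s)"
    by (simp add: algebra_simps)
  also have "\<dots> \<in> principal_ideal R w"
    using Suc.IH s \<open>s \<in> R\<close> by (intro principal_ideal_add principal_ideal_mult R)
  finally show ?case .
qed

section \<open>Valuation rings\<close>

lemma is_prime_of_subring: "is_prime_of V \<Longrightarrow> is_subring V"
  unfolding is_prime_of_def is_subring_def by blast

lemma is_prime_of_inverse: "is_prime_of V \<Longrightarrow> x \<notin> V \<Longrightarrow> inverse x \<in> V"
proof -
  assume V: "is_prime_of V" and "x \<notin> V"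
  then have "x \<noteq> 0"
    using subring_zero[OF is_prime_of_subring[OF V]] by blast
  then show ?thesis
    using V \<open>x \<notin> V\<close> unfolding is_prime_of_def by blast
qed

text \<open>The disjunct \<open>z = 0\<close> is needed because \<open>inverse 0 = 0\<close>.\<close>
definition max_ideal :: "'a::field set \<Rightarrow> 'a set" where
  "max_ideal V = {z \<in> V. z = 0 \<or> inverse z \<notin> V}"

lemma mem_units_iff: "u \<in> V - max_ideal V \<longleftrightarrow> u \<in> V \<and> u \<noteq> 0 \<and> inverse u \<in> V"
  unfolding max_ideal_def by auto

lemma inverse_mem_max_ideal: "is_prime_of V \<Longrightarrow> x \<notin> V \<Longrightarrow> inverse x \<in> max_ideal V"
  by (simp add: max_ideal_def is_prime_of_inverse)

lemma max_ideal_subset: "max_ideal V \<subseteq> V"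
  unfolding max_ideal_def by blast

lemma one_notin_max_ideal: "is_prime_of V \<Longrightarrow> 1 \<notin> max_ideal V"
  by (simp add: max_ideal_def is_prime_of_subring subring_one)

lemma max_ideal_mult:
  assumes V: "is_prime_of V" and a: "a \<in> max_ideal V" and b: "b \<in> V"
  shows "a * b \<in> max_ideal V"
  unfolding max_ideal_def
proof (intro CollectI conjI)
  have R: "is_subring V"
    using V is_prime_of_subring by blast
  show "a * b \<in> V"
    using a b subring_mult[OF R] max_ideal_subset by blast
  have "inverse (a * b) \<notin> V" if "a * b \<noteq> 0"
  proof
    assume "inverse (a * b) \<in> V"
    then have "inverse (a * b) * b \<in> V"
      using b subring_mult[OF R] by blast
    moreover have "inverse (a * b) * b = inverse a"
      using \<open>a * b \<noteq> 0\<close> by (simp add: field_simps)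
    ultimately have "inverse a \<in> V"
      by metis
    then show False
      using a \<open>a * b \<noteq> 0\<close> unfolding max_ideal_def by simp
  qed
  then show "a * b = 0 \<or> inverse (a * b) \<notin> V"
    by blast
qed

lemma max_ideal_add:
  assumes V: "is_prime_of V" and "a \<in> max_ideal V" "b \<in> max_ideal V"
  shows "a + b \<in> max_ideal V"
proof -
  have R: "is_subring V"
    using V is_prime_of_subring by blast
  have sum_mem: "x + y \<in> max_ideal V"
    if x: "x \<in> max_ideal V" and y: "y \<in> max_ideal V" and "x / y \<in> V" for x y
  proof (cases "y = 0")
    case True
    then show ?thesis using x by simp
  next
    case False
    then have "x + y = y * (1 + x / y)"
      by (simp add: field_simps)
    then show ?thesis
      using max_ideal_mult[OF V y] subring_add[OF R subring_one[OF R] \<open>x / y \<in> V\<close>] by simp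
  qed
  show ?thesis
  proof (cases "a / b \<in> V")
    case True
    then show ?thesis using sum_mem assms by blast
  next
    case False
    then have "inverse (a / b) \<in> V"
      using is_prime_of_inverse[OF V] by blast
    then have "b / a \<in> V"
      by simp
    then show ?thesis using sum_mem[of b a] assms by (simp add: add.commute)
  qed
qed

lemma units_add_max_ideal:
  assumes V: "is_prime_of V" and u: "u \<in> V - max_ideal V" and t: "t \<in> max_ideal V"
  shows "u + t \<in> V - max_ideal V"
proof -
  have R: "is_subring V"
    using V is_prime_of_subring by blast
  have "- t \<in> max_ideal V"
    using max_ideal_mult[OF V t subring_uminus[OF R subring_one[OF R]]] by simp
  have "u + t \<notin> max_ideal V"
  proof
    assume "u + t \<in> max_ideal V"
    then have "u + t + - t \<in> max_ideal V"
      using max_ideal_add[OF V] \<open>- t \<in> max_ideal V\<close> by blast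
    then show False
      using u by simp
  qed
  then show ?thesis
    using u t subring_add[OF R] max_ideal_subset by blast
qed

lemma poly_mem_units:
  assumes V: "is_prime_of V" and coeffs: "\<And>i. coeff g i \<in> V"
    and g0: "coeff g 0 \<in> V - max_ideal V" and z: "z \<in> max_ideal V"
  shows "poly g z \<in> V - max_ideal V"
proof (cases g)
  case (pCons a q)
  have "\<And>i. coeff q i \<in> V"
    using coeffs pCons by (metis coeff_pCons_Suc)
  then have "poly q z \<in> V"
    using subring_poly[OF is_prime_of_subring[OF V]] z max_ideal_subset by blast
  then have "z * poly q z \<in> max_ideal V"
    using max_ideal_mult[OF V z] by blast
  then show ?thesis
    using units_add_max_ideal[OF V] g0 pCons by simp
qed

section \<open>Constants as the intersection of all valuation rings\<close>

lemma subring_prime_subfield: "is_subring (prime_subfield :: 'a::field set)"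
  unfolding is_subring_def prime_subfield_def
proof (intro conjI ballI)
  show "1 \<in> range of_int"
    by (metis of_int_1 rangeI)
  fix x y :: 'a assume "x \<in> range of_int" "y \<in> range of_int"
  then obtain a b where "x = of_int a" "y = of_int b"
    by blast
  then show "x + y \<in> range of_int" "x * y \<in> range of_int" "- x \<in> range of_int"
    by (metis of_int_add rangeI, metis of_int_mult rangeI, metis of_int_minus rangeI)
qed

lemma prime_subfield_subset: "is_subring R \<Longrightarrow> prime_subfield \<subseteq> R"
  unfolding prime_subfield_def using subring_of_int by blast

lemma inverse_prime_subfield:
  assumes "CHAR('a::field) > 0" and "(c::'a) \<in> prime_subfield"
  shows "inverse c \<in> prime_subfield"
proof (cases "c = 0")
  case True
  then show ?thesis using assms(2) by simp
next
  case False
  obtain k where k: "c = of_int k"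
    using assms unfolding prime_subfield_def by blast
  have "prime (int CHAR('a))"
    using prime_CHAR_semidom[OF assms(1)] by simp
  moreover have "\<not> int CHAR('a) dvd k"
    using False k of_int_eq_0_iff_char_dvd by blast
  ultimately have "gcd k (int CHAR('a)) = 1"
    by (metis coprime_iff_gcd_eq_1 gcd.commute prime_imp_coprime)
  then obtain u v where "u * k + v * int CHAR('a) = 1"
    using bezout_int[of k "int CHAR('a)"] by auto
  then have "(of_int (u * k + v * int CHAR('a)) :: 'a) = 1"
    by simp
  then have "of_int u * c = (1::'a)"
    using k by simp
  then have "inverse c = of_int u"
    using False by (metis inverse_unique mult.commute)
  then show ?thesis
    unfolding prime_subfield_def by blast
qed

lemma coeff_reflect_poly_mem: "0 \<in> S \<Longrightarrow> (\<And>i. coeff f i \<in> S) \<Longrightarrow> coeff (reflect_poly f) i \<in> S"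
  by (simp add: coeff_reflect_poly)

lemma algebraic_over_prime_inverse:
  assumes "algebraic_over_prime x"
  shows "algebraic_over_prime (inverse x)"
proof (cases "x = 0")
  case False
  obtain f where f: "f \<noteq> 0" "\<forall>i. coeff f i \<in> prime_subfield" "poly f x = 0"
    using assms unfolding algebraic_over_prime_def by blast
  have "poly (reflect_poly f) (inverse x) = 0"
    using poly_reflect_poly_nz[of "inverse x" f] False f(3) by simp
  moreover have "\<forall>i. coeff (reflect_poly f) i \<in> prime_subfield"
    using coeff_reflect_poly_mem subring_zero[OF subring_prime_subfield] f(2) by blast
  ultimately show ?thesis
    unfolding algebraic_over_prime_def using f(1) by (metis reflect_poly_eq_0_iff)
qed (use assms in simp)

lemma algebraic_over_prime_mem_prime:
  assumes "CHAR('a::field) > 0" and V: "is_prime_of V" and "algebraic_over_prime (x::'a)"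
  shows "x \<in> V"
proof (rule ccontr)
  assume "x \<notin> V"
  obtain f where f: "f \<noteq> 0" "\<forall>i. coeff f i \<in> prime_subfield" "poly f x = 0"
    using assms unfolding algebraic_over_prime_def by blast
  have Fp: "prime_subfield \<subseteq> V"
    using prime_subfield_subset[OF is_prime_of_subring[OF V]] .
  have "x \<noteq> 0"
    using \<open>x \<notin> V\<close> subring_zero[OF is_prime_of_subring[OF V]] by blast
  have "coeff (reflect_poly f) 0 \<in> V - max_ideal V"
    unfolding mem_units_iff using f inverse_prime_subfield[OF assms(1)] Fp by auto
  moreover have "\<And>i. coeff (reflect_poly f) i \<in> V"
    using coeff_reflect_poly_mem[of V f] f(2) Fp subring_zero[OF is_prime_of_subring[OF V]] by blast
  ultimately have "poly (reflect_poly f) (inverse x) \<in> V - max_ideal V"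
    using poly_mem_units[OF V] inverse_mem_max_ideal[OF V \<open>x \<notin> V\<close>] by blast
  moreover have "poly (reflect_poly f) (inverse x) = 0"
    using poly_reflect_poly_nz[of "inverse x" f] \<open>x \<noteq> 0\<close> f(3) by simp
  ultimately show False
    unfolding mem_units_iff by simp
qed

definition avoiding_subring :: "'a::field \<Rightarrow> 'a set \<Rightarrow> bool" where
  "avoiding_subring v R \<longleftrightarrow> is_subring R \<and> inverse v \<in> R \<and> v \<notin> R"

definition maximal_avoiding_subring :: "'a::field \<Rightarrow> 'a set \<Rightarrow> bool" where
  "maximal_avoiding_subring v R \<longleftrightarrow>
     avoiding_subring v R \<and> (\<forall>S. avoiding_subring v S \<and> R \<subseteq> S \<longrightarrow> S = R)"

lemma exists_maximal_avoiding_subring: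
  assumes "avoiding_subring v R0"
  shows "\<exists>R. maximal_avoiding_subring v R"
proof -
  have "\<exists>M\<in>{R. avoiding_subring v R}. \<forall>S\<in>{R. avoiding_subring v R}. M \<subseteq> S \<longrightarrow> S = M"
  proof (rule subset_Zorn_nonempty)
    show "{R. avoiding_subring v R} \<noteq> {}"
      using assms by blast
    fix C assume "C \<noteq> {}" and "subset.chain {R. avoiding_subring v R} C"
    then have C: "\<And>R. R \<in> C \<Longrightarrow> avoiding_subring v R"
      and chain: "\<And>R S. R \<in> C \<Longrightarrow> S \<in> C \<Longrightarrow> R \<subseteq> S \<or> S \<subseteq> R"
      unfolding subset_chain_def by blast+
    have "is_subring (\<Union>C)"
      using subring_Union_chain[OF \<open>C \<noteq> {}\<close> _ chain] C unfolding avoiding_subring_def by blast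
    then show "\<Union>C \<in> {R. avoiding_subring v R}"
      using C \<open>C \<noteq> {}\<close> unfolding avoiding_subring_def by blast
  qed
  then show ?thesis
    unfolding maximal_avoiding_subring_def by blast
qed

lemma avoiding_subring_nonzero: "avoiding_subring v R \<Longrightarrow> v \<noteq> 0"
  unfolding avoiding_subring_def using subring_zero by blast

lemma one_notin_principal_ideal:
  assumes "avoiding_subring v R"
  shows "1 \<notin> principal_ideal R (inverse v)"
proof
  assume "1 \<in> principal_ideal R (inverse v)"
  then obtain r where "r \<in> R" "1 = inverse v * r"
    unfolding principal_ideal_def by blast
  then have "r = v"
    using avoiding_subring_nonzero[OF assms] by (metis divide_inverse_commute eq_divide_eq mult_1)
  then show False
    using \<open>r \<in> R\<close> assms unfolding avoiding_subring_def by blast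
qed

lemma maximal_avoiding_adjoin:
  assumes M: "maximal_avoiding_subring v R" and "x \<notin> R"
  shows "v \<in> ring_adjoin R x"
proof (rule ccontr)
  assume "v \<notin> ring_adjoin R x"
  moreover have R: "is_subring R" "inverse v \<in> R"
    using M unfolding maximal_avoiding_subring_def avoiding_subring_def by blast+
  ultimately have "avoiding_subring v (ring_adjoin R x)"
    unfolding avoiding_subring_def using subring_ring_adjoin subset_ring_adjoin by blast
  then have "ring_adjoin R x = R"
    using M subset_ring_adjoin[OF R(1)] unfolding maximal_avoiding_subring_def by blast
  then show False
    using mem_ring_adjoin_self[OF R(1)] \<open>x \<notin> R\<close> by blast
qed

text \<open>If \<open>inverse (1 - a) \<notin> R\<close>, then \<open>v\<close> is a polynomial in it; clearing denominators with
  \<open>(1 - a) ^ n \<in> 1 + R / v\<close> puts \<open>v\<close> into \<open>R\<close>.\<close>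
lemma maximal_avoiding_one_minus_unit:
  assumes M: "maximal_avoiding_subring v R" and a: "a \<in> principal_ideal R (inverse v)"
  shows "1 - a \<noteq> 0 \<and> inverse (1 - a) \<in> R"
proof -
  have A: "avoiding_subring v R"
    using M unfolding maximal_avoiding_subring_def by blast
  then have R: "is_subring R" and w: "inverse v \<in> R" and "v \<notin> R"
    unfolding avoiding_subring_def by blast+
  define s where "s = 1 - a"
  have "s \<in> R"
    unfolding s_def using a principal_ideal_subset[OF R w] subring_diff[OF R subring_one[OF R]] by blast
  have "s \<noteq> 0"
    using a one_notin_principal_ideal[OF A] unfolding s_def by auto
  moreover have "inverse s \<in> R"
  proof (rule ccontr)
    assume "inverse s \<notin> R"
    then obtain f where f: "\<forall>i. coeff f i \<in> R" "v = poly f (inverse s)"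
      using maximal_avoiding_adjoin[OF M] unfolding ring_adjoin_def by blast
    have "1 - s ^ degree f \<in> principal_ideal R (inverse v)"
      using one_minus_power_principal_ideal[OF R w] a unfolding s_def by simp
    then obtain c where c: "c \<in> R" "1 - s ^ degree f = inverse v * c"
      unfolding principal_ideal_def by blast
    have "s ^ degree f * v = poly (reflect_poly f) s"
      using poly_reflect_poly_nz[OF \<open>s \<noteq> 0\<close>, of f] f(2) by simp
    moreover have "poly (reflect_poly f) s \<in> R"
      using subring_poly[OF R \<open>s \<in> R\<close>] coeff_reflect_poly_mem[OF subring_zero[OF R]] f(1) by blast
    moreover have "s ^ degree f * v = v - c"
    proof -
      have "s ^ degree f * v = (1 - inverse v * c) * v"
        by (simp flip: c(2))
      also have "\<dots> = v - c"
        using avoiding_subring_nonzero[OF A] by (simp add: algebra_simps)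
      finally show ?thesis .
    qed
    ultimately have "v - c + c \<in> R"
      using subring_add[OF R _ c(1)] by simp
    then show False
      using \<open>v \<notin> R\<close> by simp
  qed
  ultimately show ?thesis
    unfolding s_def by blast
qed

definition one_relation :: "'a::comm_ring_1 set \<Rightarrow> 'a \<Rightarrow> 'a poly \<Rightarrow> bool" where
  "one_relation I y f \<longleftrightarrow> (\<forall>i. coeff f i \<in> I) \<and> poly f y = 1"

lemma maximal_avoiding_one_relation:
  assumes M: "maximal_avoiding_subring v R" and "x \<notin> R"
  shows "\<exists>f. one_relation (principal_ideal R (inverse v)) x f"
proof -
  obtain f where f: "\<forall>i. coeff f i \<in> R" "v = poly f x"
    using maximal_avoiding_adjoin[OF assms] unfolding ring_adjoin_def by blast
  have "v \<noteq> 0"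
    using M avoiding_subring_nonzero unfolding maximal_avoiding_subring_def by blast
  then have "one_relation (principal_ideal R (inverse v)) x (smult (inverse v) f)"
    unfolding one_relation_def using f principal_idealI by auto
  then show ?thesis ..
qed

lemma power_mult_poly_inverse:
  fixes y :: "'a::field"
  assumes "y \<noteq> 0" and "poly g (inverse y) = 1" and "degree g \<le> n"
  shows "(1 - coeff g 0) * y ^ n = poly (\<Sum>j\<in>{1..degree g}. monom (coeff g j) (n - j)) y"
proof -
  have "y ^ n = y ^ n * (\<Sum>j\<le>degree g. coeff g j * inverse y ^ j)"
    using assms(2) unfolding poly_altdef by simp
  also have "\<dots> = (\<Sum>j\<le>degree g. coeff g j * y ^ (n - j))"
    unfolding sum_distrib_left
  proof (rule sum.cong)
    fix j assume "j \<in> {..degree g}"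
    then have "y ^ (n - j) = y ^ n * inverse y ^ j"
      using assms(1,3) by (simp add: power_diff power_inverse divide_inverse)
    then show "y ^ n * (coeff g j * inverse y ^ j) = coeff g j * y ^ (n - j)"
      by simp
  qed simp
  also have "\<dots> = coeff g 0 * y ^ n + (\<Sum>j\<in>{1..degree g}. coeff g j * y ^ (n - j))"
    by (simp add: atMost_atLeast0 sum.atLeast_Suc_atMost)
  finally show ?thesis
    by (simp add: poly_sum poly_monom algebra_simps)
qed

lemma power_mult_poly_inverse_lower_degree:
  fixes y :: "'a::field"
  assumes R: "is_subring R" and coeffs: "\<And>j. coeff g j \<in> R"
    and "y \<noteq> 0" and "poly g (inverse y) = 1" and "degree g \<le> n"
  obtains P where "\<And>i. coeff P i \<in> R" and "\<And>i. n \<le> i \<Longrightarrow> coeff P i = 0"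
    and "poly P y = (1 - coeff g 0) * y ^ n"
proof -
  define P where "P = (\<Sum>j\<in>{1..degree g}. monom (coeff g j) (n - j))"
  have P_coeff: "coeff P i = (\<Sum>j\<in>{1..degree g}. if n - j = i then coeff g j else 0)" for i
    unfolding P_def coeff_sum by (simp add: coeff_monom)
  show ?thesis
  proof (rule that[of P])
    show "coeff P i \<in> R" for i
      unfolding P_coeff using coeffs subring_zero[OF R] by (intro subring_sum[OF R]) auto
    show "coeff P i = 0" if "n \<le> i" for i
      unfolding P_coeff using that \<open>degree g \<le> n\<close> by (intro sum.neutral) auto
    show "poly P y = (1 - coeff g 0) * y ^ n"
      unfolding P_def using power_mult_poly_inverse[OF assms(3-5)] by simp
  qed
qed

text \<open>Multiplying \<open>g (1 / y) = 1\<close> by \<open>y ^ n\<close>, \<open>n = degree f\<close>, expresses \<open>(1 - g\<^sub>0) y ^ n\<close> by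
  lower powers of \<open>y\<close>; as \<open>1 - g\<^sub>0\<close> is a unit of \<open>R\<close>, this removes the leading term of \<open>f\<close>.\<close>
lemma one_relation_degree_reduction:
  assumes M: "maximal_avoiding_subring v R" and "y \<noteq> 0"
    and f: "one_relation (principal_ideal R (inverse v)) y f"
    and g: "one_relation (principal_ideal R (inverse v)) (inverse y) g"
    and "degree g \<le> degree f"
  shows "\<exists>f'. one_relation (principal_ideal R (inverse v)) y f' \<and> degree f' < degree f"
proof -
  define I where "I = principal_ideal R (inverse v)"
  define n where "n = degree f"
  define a where "a = coeff f n"
  define s where "s = 1 - coeff g 0"
  have R: "is_subring R" and "I \<subseteq> R"
    using M principal_ideal_subset unfolding I_def maximal_avoiding_subring_def avoiding_subring_def
    by blast+
  have "0 \<in> I"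
    using principal_idealI[OF subring_zero[OF R]] unfolding I_def by fastforce
  have g_I: "coeff g j \<in> I" for j
    using g unfolding one_relation_def I_def by blast
  have s: "s \<noteq> 0" "inverse s \<in> R"
    using maximal_avoiding_one_minus_unit[OF M g_I[of 0, unfolded I_def]] unfolding s_def by blast+
  obtain P where P_R: "\<And>i. coeff P i \<in> R" and P_high: "\<And>i. n \<le> i \<Longrightarrow> coeff P i = 0"
    and P_y: "poly P y = s * y ^ n"
    using power_mult_poly_inverse_lower_degree[OF R _ \<open>y \<noteq> 0\<close>] g_I \<open>I \<subseteq> R\<close> g \<open>degree g \<le> degree f\<close>
    unfolding s_def n_def one_relation_def by blast
  define f' where "f' = f - monom a n + smult (a * inverse s) P"
  have "poly f' y = 1"
    using f s(1) unfolding f'_def one_relation_def by (simp add: P_y poly_monom)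
  moreover have "coeff f' i \<in> I" for i
  proof -
    have "coeff f' i = (coeff f i - (if n = i then a else 0)) + a * (inverse s * coeff P i)"
      unfolding f'_def by (simp add: coeff_monom algebra_simps)
    moreover have "a \<in> I" "coeff f i \<in> I"
      using f unfolding a_def I_def one_relation_def by blast+
    ultimately show ?thesis
      using \<open>0 \<in> I\<close> subring_mult[OF R s(2) P_R] unfolding I_def
      by (auto intro!: principal_ideal_add principal_ideal_diff principal_ideal_mult R)
  qed
  moreover have "degree f' < n"
  proof -
    have "coeff f' i = 0" if "n \<le> i" for i
      using that P_high unfolding f'_def a_def n_def by (auto simp: coeff_monom coeff_eq_0)
    moreover have "coeff f' (degree f') \<noteq> 0"
      using \<open>poly f' y = 1\<close> by auto
    ultimately show ?thesis
      by (meson not_le)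
  qed
  ultimately show ?thesis
    unfolding one_relation_def I_def n_def by blast
qed

lemma maximal_avoiding_no_relation_pair:
  assumes M: "maximal_avoiding_subring v R" and "x \<noteq> 0"
  shows "\<not> (one_relation (principal_ideal R (inverse v)) x f \<and>
    one_relation (principal_ideal R (inverse v)) (inverse x) g)"
proof (induction "degree f + degree g" arbitrary: f g rule: less_induct)
  case less
  define I where "I = principal_ideal R (inverse v)"
  show ?case
    unfolding I_def[symmetric]
  proof
    assume fg: "one_relation I x f \<and> one_relation I (inverse x) g"
    consider "degree g \<le> degree f" | "degree f \<le> degree g"
      by linarith
    then show False
    proof cases
      case 1
      then obtain f' where "one_relation I x f'" "degree f' < degree f"
        using one_relation_degree_reduction[OF M \<open>x \<noteq> 0\<close>] fg unfolding I_def by blast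
      then show False
        using less(1)[of f' g] fg unfolding I_def by simp
    next
      case 2
      then obtain g' where "one_relation I (inverse x) g'" "degree g' < degree g"
        using one_relation_degree_reduction[OF M, of "inverse x" g f] fg \<open>x \<noteq> 0\<close>
        unfolding I_def by auto
      then show False
        using less(1)[of f g'] fg unfolding I_def by simp
    qed
  qed
qed

lemma maximal_avoiding_is_prime:
  assumes M: "maximal_avoiding_subring v R"
  shows "is_prime_of R"
proof -
  have "x \<in> R \<or> inverse x \<in> R" if "x \<noteq> 0" for x
    using maximal_avoiding_one_relation[OF M] maximal_avoiding_no_relation_pair[OF M that] by metis
  moreover have "is_subring R" "v \<notin> R"
    using M unfolding maximal_avoiding_subring_def avoiding_subring_def by blast+
  ultimately show ?thesis
    unfolding is_prime_of_def is_subring_def by blast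
qed

lemma algebraic_over_prime_prime_subfield:
  assumes "c \<in> prime_subfield"
  shows "algebraic_over_prime c"
proof -
  have "coeff [:- c, 1:] i \<in> prime_subfield" for i
    using assms subring_uminus subring_one subring_zero subring_prime_subfield
    by (auto simp: coeff_pCons split: nat.splits)
  then show ?thesis
    unfolding algebraic_over_prime_def by (intro exI[of _ "[:- c, 1:]"]) auto
qed

lemma transcendental_not_mem_prime:
  assumes "\<not> algebraic_over_prime v"
  shows "\<exists>V. is_prime_of V \<and> v \<notin> V"
proof -
  define R0 where "R0 = ring_adjoin prime_subfield (inverse v)"
  have "v \<noteq> 0"
    using assms algebraic_over_prime_prime_subfield subring_zero[OF subring_prime_subfield] by blast
  have "v \<notin> R0"
  proof
    assume "v \<in> R0"
    then obtain f where f: "\<forall>i. coeff f i \<in> prime_subfield" "v = poly f (inverse v)"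
      unfolding R0_def ring_adjoin_def by blast
    have "poly (pCons (- 1) f) (inverse v) = 0"
      using f(2) \<open>v \<noteq> 0\<close> by simp
    moreover have "coeff (pCons (- 1) f) i \<in> prime_subfield" for i
      using f(1) subring_uminus[OF subring_prime_subfield subring_one[OF subring_prime_subfield]]
      by (auto simp: coeff_pCons split: nat.splits)
    ultimately have "algebraic_over_prime (inverse v)"
      unfolding algebraic_over_prime_def by (metis pCons_eq_0_iff neg_equal_0_iff_equal one_neq_zero)
    then show False
      using algebraic_over_prime_inverse assms by fastforce
  qed
  then have "avoiding_subring v R0"
    unfolding avoiding_subring_def R0_def
    using subring_ring_adjoin mem_ring_adjoin_self subring_prime_subfield by blast
  then obtain R where "maximal_avoiding_subring v R"
    using exists_maximal_avoiding_subring by blast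
  then show ?thesis
    using maximal_avoiding_is_prime
    unfolding maximal_avoiding_subring_def avoiding_subring_def by blast
qed

lemma constant_field_eq_Inter_primes:
  assumes "CHAR('a::field) > 0"
  shows "(constant_field :: 'a set) = \<Inter>{V. is_prime_of V}"
  unfolding constant_field_def
  using algebraic_over_prime_mem_prime[OF assms] transcendental_not_mem_prime by blast

lemma constant_field_subfield:
  assumes "CHAR('a::field) > 0"
  shows "is_subfield (constant_field :: 'a set)"
  unfolding is_subfield_def
proof
  show "is_subring (constant_field :: 'a set)"
    unfolding constant_field_eq_Inter_primes[OF assms] by (blast intro: subring_Inter is_prime_of_subring)
  show "\<forall>x\<in>constant_field. inverse x \<in> (constant_field :: 'a set)"
    unfolding constant_field_def using algebraic_over_prime_inverse by blast
qed

section \<open>Periodic points\<close>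

lemma subring_ring_away_from: "is_subring (ring_away_from Vinf)"
proof -
  have "ring_away_from Vinf = \<Inter>{V. is_prime_of V \<and> V \<noteq> Vinf}"
    unfolding ring_away_from_def by blast
  then show ?thesis
    using subring_Inter[of "{V. is_prime_of V \<and> V \<noteq> Vinf}"] is_prime_of_subring by auto
qed

lemma units_ring_away_from_constant:
  assumes "CHAR('a::field) > 0" and "is_prime_of Vinf"
    and "u \<in> ring_away_from Vinf" and "inverse u \<in> ring_away_from Vinf"
  shows "(u::'a) \<in> constant_field"
proof -
  have mem_constant: "x \<in> constant_field" if "x \<in> ring_away_from Vinf" "x \<in> Vinf" for x :: 'a
    using that unfolding constant_field_eq_Inter_primes[OF assms(1)] ring_away_from_def by blast
  show ?thesis
  proof (cases "u \<in> Vinf")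
    case True
    then show ?thesis using mem_constant assms(3) by blast
  next
    case False
    then have "inverse u \<in> constant_field"
      using mem_constant assms(2,4) is_prime_of_inverse by blast
    then show ?thesis
      using constant_field_subfield[OF assms(1)] unfolding is_subfield_def by (metis inverse_inverse_eq)
  qed
qed

lemma periodic_points_image: "f ` periodic_points f \<subseteq> periodic_points f"
proof
  fix y assume "y \<in> f ` periodic_points f"
  then obtain x n where "y = f x" "n \<ge> 1" "(f ^^ n) x = x"
    unfolding periodic_points_def by blast
  then have "(f ^^ n) y = y"
    by (metis funpow_swap1)
  then show "y \<in> periodic_points f"
    unfolding periodic_points_def using \<open>n \<ge> 1\<close> by blast
qed

lemma fixed_point_periodic: "f x = x \<Longrightarrow> x \<in> periodic_points f"
  unfolding periodic_points_def by (intro CollectI exI[of _ 1]) simp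

text \<open>\<open>\<phi> y = u * y ^ degree \<phi>\<close>, where \<open>u\<close>, the reflected polynomial of \<open>\<phi>\<close> at \<open>inverse y\<close>,
  is a unit of \<open>V\<close> because its constant term is \<open>lead_coeff \<phi>\<close>.\<close>
lemma poly_pole_deepens:
  assumes V: "is_prime_of V" and coeffs: "\<And>i. coeff \<phi> i \<in> V"
    and lead: "lead_coeff \<phi> \<in> V - max_ideal V" and deg: "degree \<phi> \<ge> 2" and "y \<notin> V"
  shows "poly \<phi> y \<notin> V \<and> y / poly \<phi> y \<in> max_ideal V"
proof -
  have R: "is_subring V"
    using V is_prime_of_subring by blast
  define z where "z = inverse y"
  define u where "u = poly (reflect_poly \<phi>) z"
  have z: "z \<in> max_ideal V"
    unfolding z_def using inverse_mem_max_ideal[OF V \<open>y \<notin> V\<close>] .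
  have "y \<noteq> 0"
    using \<open>y \<notin> V\<close> subring_zero[OF R] by blast
  have "u \<in> V - max_ideal V"
    unfolding u_def using lead z coeff_reflect_poly_mem[OF subring_zero[OF R] coeffs]
    by (intro poly_mem_units[OF V]) simp_all
  then have "u \<noteq> 0" "inverse u \<in> V"
    unfolding mem_units_iff by blast+
  obtain k where k: "degree \<phi> = Suc (Suc k)"
    using deg by (metis add_2_eq_Suc le_Suc_ex)
  have "poly \<phi> y = u * y ^ degree \<phi>"
    using poly_reflect_poly_nz[of z \<phi>] \<open>y \<noteq> 0\<close> unfolding u_def z_def
    by (simp add: field_simps power_inverse)
  then have phi_y: "poly \<phi> y = u * y * y ^ Suc k" and "poly \<phi> y \<noteq> 0"
    using k \<open>u \<noteq> 0\<close> \<open>y \<noteq> 0\<close> by simp_all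
  have "y / poly \<phi> y = z * (z ^ k * inverse u)"
    unfolding phi_y z_def using \<open>y \<noteq> 0\<close> \<open>u \<noteq> 0\<close> by (simp add: field_simps power_inverse)
  also have "\<dots> \<in> max_ideal V"
    using max_ideal_mult[OF V z] subring_mult[OF R] subring_power[OF R] z max_ideal_subset
      \<open>inverse u \<in> V\<close> by blast
  finally have quotient: "y / poly \<phi> y \<in> max_ideal V" .
  have "poly \<phi> y \<notin> V"
  proof
    assume "poly \<phi> y \<in> V"
    then have "y / poly \<phi> y * poly \<phi> y \<in> V"
      using quotient max_ideal_subset subring_mult[OF R] by blast
    then show False
      using \<open>poly \<phi> y \<noteq> 0\<close> \<open>y \<notin> V\<close> by simp
  qed
  then show ?thesis
    using quotient by blast
qed

lemma periodic_points_subset_prime: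
  assumes V: "is_prime_of V" and coeffs: "\<And>i. coeff \<phi> i \<in> V"
    and lead: "lead_coeff \<phi> \<in> V - max_ideal V" and deg: "degree \<phi> \<ge> 2"
  shows "periodic_points (poly \<phi>) \<subseteq> V"
proof
  fix x assume "x \<in> periodic_points (poly \<phi>)"
  then obtain n where "n \<ge> 1" "(poly \<phi> ^^ n) x = x"
    unfolding periodic_points_def by blast
  show "x \<in> V"
  proof (rule ccontr)
    assume "x \<notin> V"
    have "(poly \<phi> ^^ Suc k) x \<notin> V \<and> x / (poly \<phi> ^^ Suc k) x \<in> max_ideal V" for k
    proof (induction k)
      case 0
      show ?case
        using poly_pole_deepens[OF V coeffs lead deg \<open>x \<notin> V\<close>] by simp
    next
      case (Suc k)
      define y where "y = (poly \<phi> ^^ Suc k) x"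
      have y: "y \<notin> V" "x / y \<in> max_ideal V"
        using Suc.IH unfolding y_def by blast+
      then have "y \<noteq> 0"
        using subring_zero[OF is_prime_of_subring[OF V]] by blast
      have step: "poly \<phi> y \<notin> V" "y / poly \<phi> y \<in> max_ideal V"
        using poly_pole_deepens[OF V coeffs lead deg y(1)] by blast+
      have "x / poly \<phi> y = x / y * (y / poly \<phi> y)"
        using \<open>y \<noteq> 0\<close> by simp
      also have "\<dots> \<in> max_ideal V"
        using max_ideal_mult[OF V y(2)] step(2) max_ideal_subset by blast
      finally show ?case
        using step(1) unfolding y_def by simp
    qed
    moreover obtain k where "n = Suc k"
      using \<open>n \<ge> 1\<close> by (cases n) auto
    ultimately have "x / x \<in> max_ideal V"
      using \<open>(poly \<phi> ^^ n) x = x\<close> by metis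
    moreover have "x \<noteq> 0"
      using \<open>x \<notin> V\<close> subring_zero[OF is_prime_of_subring[OF V]] by blast
    ultimately show False
      using one_notin_max_ideal[OF V] by simp
  qed
qed

lemma periodic_points_subset_ring_away_from:
  assumes coeffs: "\<And>i. coeff \<phi> i \<in> ring_away_from Vinf"
    and lead: "lead_coeff \<phi> \<in> ring_away_from Vinf" "inverse (lead_coeff \<phi>) \<in> ring_away_from Vinf"
    and deg: "degree \<phi> \<ge> 2"
  shows "periodic_points (poly \<phi>) \<subseteq> ring_away_from Vinf"
proof -
  have "periodic_points (poly \<phi>) \<subseteq> V" if V: "is_prime_of V" "V \<noteq> Vinf" for V
  proof (rule periodic_points_subset_prime[OF V(1) _ _ deg])
    show "coeff \<phi> i \<in> V" for i
      using coeffs V unfolding ring_away_from_def by blast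
    have "lead_coeff \<phi> \<noteq> 0"
      using deg by auto
    then show "lead_coeff \<phi> \<in> V - max_ideal V"
      using lead V unfolding mem_units_iff ring_away_from_def by blast
  qed
  then show ?thesis
    unfolding ring_away_from_def by blast
qed

lemma funpow_poly_sub_fixed_point_dvd:
  assumes R: "is_subring R" and coeffs: "\<And>i. coeff \<phi> i \<in> R"
    and "x \<in> R" "q \<in> R" and fixed: "poly \<phi> q = q"
  shows "\<exists>r\<in>R. (poly \<phi> ^^ k) x - q = (x - q) * r"
proof (induction k)
  case 0
  show ?case using subring_one[OF R] by force
next
  case (Suc k)
  then obtain r where r: "r \<in> R" "(poly \<phi> ^^ k) x - q = (x - q) * r"
    by blast
  have "(poly \<phi> ^^ k) x \<in> R"
    by (induction k) (auto simp: \<open>x \<in> R\<close> intro: subring_poly[OF R _ coeffs])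
  then obtain r' where r': "r' \<in> R" "poly \<phi> ((poly \<phi> ^^ k) x) - poly \<phi> q = ((poly \<phi> ^^ k) x - q) * r'"
    using subring_poly_diff_dvd[OF R coeffs _ \<open>q \<in> R\<close>] by blast
  have "(poly \<phi> ^^ Suc k) x - q = (x - q) * (r * r')"
    using r(2) r'(2) fixed by (simp add: mult.assoc)
  then show ?case
    using subring_mult[OF R r(1) r'(1)] by blast
qed

lemma periodic_sub_fixed_point_unit_multiple:
  fixes \<phi> :: "'a::field poly"
  assumes R: "is_subring R" and coeffs: "\<And>i. coeff \<phi> i \<in> R"
    and p: "p \<in> periodic_points (poly \<phi>)" "p \<in> R" and q: "q \<in> R" "poly \<phi> q = q"
  shows "\<exists>u\<in>R. inverse u \<in> R \<and> poly \<phi> p - q = u * (p - q)"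
proof -
  obtain n where n: "n \<ge> 1" "(poly \<phi> ^^ n) p = p"
    using p(1) unfolding periodic_points_def by blast
  then obtain k where "n = Suc k"
    by (cases n) auto
  then have "(poly \<phi> ^^ k) (poly \<phi> p) = p"
    using n(2) by (simp add: funpow_swap1)
  obtain e where e: "e \<in> R" "poly \<phi> p - q = (p - q) * e"
    using funpow_poly_sub_fixed_point_dvd[OF R coeffs p(2) q, of 1] by auto
  obtain f where f: "f \<in> R" "(poly \<phi> ^^ k) (poly \<phi> p) - q = (poly \<phi> p - q) * f"
    using funpow_poly_sub_fixed_point_dvd[OF R coeffs subring_poly[OF R p(2) coeffs] q] by blast
  show ?thesis
  proof (cases "p = q")
    case True
    then show ?thesis
      using subring_one[OF R] q(2) by (intro bexI[of _ 1]) auto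
  next
    case False
    have "p - q = (p - q) * (e * f)"
      using \<open>(poly \<phi> ^^ k) (poly \<phi> p) = p\<close> e(2) f(2) by (simp add: mult.assoc)
    then have "e * f = 1"
      using False by simp
    then have "inverse e = f"
      by (simp add: inverse_unique)
    then show ?thesis
      using e f(1) by (metis mult.commute)
  qed
qed

lemma periodic_sub_fixed_points:
  assumes R: "is_subring R" and coeffs: "\<And>i. coeff \<phi> i \<in> R"
    and units: "\<And>u. u \<in> R \<Longrightarrow> inverse u \<in> R \<Longrightarrow> u \<in> C" and C: "is_subfield C"
    and p: "p \<in> periodic_points (poly \<phi>)" "p \<in> R" "poly \<phi> p \<noteq> p"
    and a: "a \<in> R" "poly \<phi> a = a" and b: "b \<in> R" "poly \<phi> b = b"
  shows "\<exists>w\<in>C. p - b = w * (p - a)"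
proof -
  obtain e where e: "e \<in> C" "poly \<phi> p - a = e * (p - a)"
    using periodic_sub_fixed_point_unit_multiple[OF R coeffs p(1,2) a] units by blast
  obtain f where f: "f \<in> C" "poly \<phi> p - b = f * (p - b)"
    using periodic_sub_fixed_point_unit_multiple[OF R coeffs p(1,2) b] units by blast
  have "f \<noteq> 1"
    using f(2) p(3) by auto
  have "(f - 1) * (p - b) = poly \<phi> p - p"
    using f(2) by (simp add: algebra_simps)
  also have "\<dots> = (e - 1) * (p - a)"
    using e(2) by (simp add: algebra_simps)
  finally have "p - b = (e - 1) / (f - 1) * (p - a)"
    using \<open>f \<noteq> 1\<close> by (simp add: field_simps)
  moreover have "(e - 1) / (f - 1) \<in> C"
  proof -
    have CR: "is_subring C"
      using C unfolding is_subfield_def by blast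
    show ?thesis
      using subfield_divide[OF C subring_diff[OF CR e(1) subring_one[OF CR]]
          subring_diff[OF CR f(1) subring_one[OF CR]]] .
  qed
  ultimately show ?thesis
    by blast
qed

lemma non_fixed_periodic_collinear:
  assumes R: "is_subring R" and coeffs: "\<And>i. coeff \<phi> i \<in> R"
    and units: "\<And>u. u \<in> R \<Longrightarrow> inverse u \<in> R \<Longrightarrow> u \<in> C" and C: "is_subfield C"
    and p: "p \<in> periodic_points (poly \<phi>)" "p \<in> R" "poly \<phi> p \<noteq> p"
    and "a \<noteq> b" and a: "a \<in> R" "poly \<phi> a = a" and b: "b \<in> R" "poly \<phi> b = b"
  shows "\<exists>c\<in>C. p - a = c * (b - a)"
proof -
  have CR: "is_subring C"
    using C unfolding is_subfield_def by blast
  obtain w where w: "w \<in> C" "p - b = w * (p - a)"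
    using periodic_sub_fixed_points[OF R coeffs units C p a b] by blast
  then have "(1 - w) * (p - a) = b - a"
    by (simp add: algebra_simps)
  moreover from this have "1 - w \<noteq> 0"
    using \<open>a \<noteq> b\<close> by auto
  ultimately have "p - a = inverse (1 - w) * (b - a)"
    by (simp add: field_simps)
  moreover have "inverse (1 - w) \<in> C"
    using C w(1) subring_diff[OF CR subring_one[OF CR]] unfolding is_subfield_def by blast
  ultimately show ?thesis
    by blast
qed

lemma periodic_points_collinear:
  assumes R: "is_subring R" and coeffs: "\<And>i. coeff \<phi> i \<in> R"
    and units: "\<And>u. u \<in> R \<Longrightarrow> inverse u \<in> R \<Longrightarrow> u \<in> C" and C: "is_subfield C"
    and per: "periodic_points (poly \<phi>) \<subseteq> R"
    and ab: "a \<noteq> b" "poly \<phi> a = a" "poly \<phi> b = b"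
    and x0: "x0 \<in> periodic_points (poly \<phi>)" "poly \<phi> x0 \<noteq> x0"
    and z: "z \<in> periodic_points (poly \<phi>)"
  shows "\<exists>c\<in>C. z - a = c * (b - a)"
proof -
  have mem_R: "x \<in> R" if "x \<in> periodic_points (poly \<phi>)" for x
    using per that by blast
  have fixed_R: "x \<in> R" if "poly \<phi> x = x" for x
    using mem_R fixed_point_periodic[of "poly \<phi>", OF that] by blast
  have collinear: "\<exists>c\<in>C. y - a = c * (b - a)"
    if "y \<in> periodic_points (poly \<phi>)" "poly \<phi> y \<noteq> y" for y
    using non_fixed_periodic_collinear[OF R coeffs units C that(1) mem_R[OF that(1)] that(2) ab(1)
        fixed_R[OF ab(2)] ab(2) fixed_R[OF ab(3)] ab(3)] .
  show ?thesis
  proof (cases "poly \<phi> z = z")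
    case True
    have CR: "is_subring C"
      using C unfolding is_subfield_def by blast
    obtain w where w: "w \<in> C" "x0 - z = w * (x0 - a)"
      using periodic_sub_fixed_points[OF R coeffs units C x0(1) mem_R[OF x0(1)] x0(2)
          fixed_R[OF ab(2)] ab(2) fixed_R[OF True] True] by blast
    obtain c where c: "c \<in> C" "x0 - a = c * (b - a)"
      using collinear[OF x0] by blast
    have "z - a = (x0 - a) - (x0 - z)"
      by simp
    also have "\<dots> = (x0 - a) - w * (x0 - a)"
      by (simp only: w(2))
    also have "\<dots> = ((1 - w) * c) * (b - a)"
      unfolding c(2) by (simp add: algebra_simps)
    finally have "z - a = ((1 - w) * c) * (b - a)" .
    moreover have "(1 - w) * c \<in> C"
      using subring_mult[OF CR subring_diff[OF CR subring_one[OF CR] w(1)] c(1)] .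
    ultimately show ?thesis
      by blast
  next
    case False
    then show ?thesis
      using collinear[OF z] by blast
  qed
qed

lemma differences_proportional:
  assumes C: "is_subfield C" and line: "\<And>z. z \<in> P \<Longrightarrow> \<exists>c\<in>C. z - a = c * d"
    and "x \<in> P" "y \<in> P" "x' \<in> P" "y' \<in> P" "x \<noteq> y" "x' \<noteq> y'"
  shows "\<exists>c\<in>C. c \<noteq> 0 \<and> y - x = c * (y' - x')"
proof -
  have CR: "is_subring C"
    using C unfolding is_subfield_def by blast
  have "\<exists>c\<in>C. v - u = c * d" if uv: "u \<in> P" "v \<in> P" for u v
  proof -
    obtain cu where "cu \<in> C" "u - a = cu * d"
      using line[OF uv(1)] by blast
    moreover obtain cv where "cv \<in> C" "v - a = cv * d"
      using line[OF uv(2)] by blast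
    ultimately
    have "v - u = (cv - cu) * d" "cv - cu \<in> C"
      using subring_diff[OF CR] by (auto simp: algebra_simps)
    then show ?thesis
      by blast
  qed
  then obtain c c' where c: "c \<in> C" "y - x = c * d" and c': "c' \<in> C" "y' - x' = c' * d"
    using assms(3-6) by meson
  have "c \<noteq> 0" "c' \<noteq> 0"
    using c(2) c'(2) assms(7,8) by auto
  then have "y - x = c / c' * (y' - x')"
    using c(2) c'(2) by simp
  moreover have "c / c' \<in> C" "c / c' \<noteq> 0"
    using subfield_divide[OF C c(1) c'(1)] \<open>c \<noteq> 0\<close> \<open>c' \<noteq> 0\<close> by simp_all
  ultimately show ?thesis
    by blast
qed

theorem lemma2p10:
  fixes Vinf :: "'a::field set" and \<phi> :: "'a poly"
  assumes "global_function_field TYPE('a)"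
    and "is_prime_of Vinf"
    and "\<forall>i. coeff \<phi> i \<in> ring_away_from Vinf"
    and "degree \<phi> \<ge> 2"
    and "lead_coeff \<phi> \<in> ring_away_from Vinf"
    and "inverse (lead_coeff \<phi>) \<in> ring_away_from Vinf"
    and "\<exists>x y. x \<noteq> y \<and> poly \<phi> x = x \<and> poly \<phi> y = y"
    and "\<exists>x \<in> periodic_points (poly \<phi>). poly \<phi> x \<noteq> x"
  shows "poly \<phi> ` periodic_points (poly \<phi>) \<subseteq> periodic_points (poly \<phi>)
    \<and> (\<forall>x\<in>periodic_points (poly \<phi>). \<forall>y\<in>periodic_points (poly \<phi>).
         \<forall>x'\<in>periodic_points (poly \<phi>). \<forall>y'\<in>periodic_points (poly \<phi>).
           x \<noteq> y \<longrightarrow> x' \<noteq> y' \<longrightarrow>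
           (\<exists>c\<in>constant_field. c \<noteq> 0 \<and> y - x = c * (y' - x')))"
proof -
  have char: "CHAR('a) > 0"
    using assms(1) unfolding global_function_field_def by blast
  obtain a b where ab: "a \<noteq> b" "poly \<phi> a = a" "poly \<phi> b = b"
    using assms(7) by blast
  obtain x0 where x0: "x0 \<in> periodic_points (poly \<phi>)" "poly \<phi> x0 \<noteq> x0"
    using assms(8) by blast
  have coeffs: "\<And>i. coeff \<phi> i \<in> ring_away_from Vinf"
    using assms(3) by blast
  have line: "\<exists>c\<in>constant_field. z - a = c * (b - a)" if "z \<in> periodic_points (poly \<phi>)" for z
    by (rule periodic_points_collinear[OF subring_ring_away_from coeffs
          units_ring_away_from_constant[OF char assms(2)] constant_field_subfield[OF char]
          periodic_points_subset_ring_away_from[OF coeffs assms(5,6,4)] ab x0 that])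
  have "\<exists>c\<in>constant_field. c \<noteq> 0 \<and> y - x = c * (y' - x')"
    if "x \<in> periodic_points (poly \<phi>)" "y \<in> periodic_points (poly \<phi>)"
      "x' \<in> periodic_points (poly \<phi>)" "y' \<in> periodic_points (poly \<phi>)" "x \<noteq> y" "x' \<noteq> y'"
    for x y x' y'
    by (rule differences_proportional[OF constant_field_subfield[OF char] line that])
  with periodic_points_image[of "poly \<phi>"] show ?thesis
    by blast
qed

end
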